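(* Let $a<0<b$, let $0<\tau<\infty$, and let $l\colon[0,\tau]\to(a,b)$ be continuously differentiable. Let $X=L^2([a,b],\mathbb{R}^2)$ and let $\mathcal{Q}^{\pm}\in\mathcal{C}^1([a,b],\mathbb{R}^{2\times2})$ be diagonal, $\mathcal{Q}^{\pm}(z)=\mathrm{diag}(q_{11}^{\pm}(z),q_{22}^{\pm}(z))$, with $mI_2\le\mathcal{Q}^{\pm}(z)\le MI_2$ for all $z\in[a,b]$ and some constants $0<m\le M$, and suppose that $$\frac{q_{11}^+}{q_{11}^-}(0)=1\quad\text{and}\quad \frac{q_{11}^+}{q_{11}^-}(z)=\frac{q_{22}^+}{q_{22}^-}(z)\ \text{ for all } z\in[a,b].$$ Let $r=0$ and let $W_B\in\mathbb{R}^{2\times4}$ satisfy $\operatorname{rank}(W_B)=2$ and $W_B\Sigma W_B^{\top}\ge0$, where $\Sigma=\begin{bmatrix}0&I_2\\ I_2&0\end{bmatrix}$. For $t\in[0,\tau]$ let $A(t)$ be the operator on $X$ defined (see context) with interface position $l(t)$. Then there exists $\omega>0$ such that for every $t\in[0,\tau]$ and every $x\in D(A(t))$, $$\langle A(t)x,x\rangle_{\mathcal{Q}_0}\le\omega\|x\|_{\mathcal{Q}_0}^2 .$$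
   Context: $P_1=\begin{bmatrix}0&-1\\-1&0\end{bmatrix}$. For an interface position $l\in(a,b)$ define the multiplication operator $\mathcal{Q}_l$ on $X$ by $(\mathcal{Q}_l x)(z)=\mathcal{Q}^-(z)x(z)$ for $z\in[a,l)$ and $(\mathcal{Q}_l x)(z)=\mathcal{Q}^+(z)x(z)$ for $z\in(l,b]$. In particular $\mathcal{Q}_0$ is this operator with $l=0$, and $X$ carries the inner product $\langle x,y\rangle_{\mathcal{Q}_0}=\frac12\int_a^b y(z)^{\top}(\mathcal{Q}_0x)(z)\,dz$ with norm $\|\cdot\|_{\mathcal{Q}_0}$. For $y=(y_1,y_2)\in X$ write $y\in D(\mathcal{J}_l)$ if $y_2\in H^1([a,b],\mathbb{R})$ and $y_1|_{(a,l)}\in H^1((a,l),\mathbb{R})$, $y_1|_{(l,b)}\in H^1((l,b),\mathbb{R})$; for such $y$, $\mathcal{J}_l y=(-y_2',\,-y_1')$ where $y_1'$ is the derivative taken separately on $(a,l)$ and $(l,b)$ (i.e. $\mathcal{J}_l$ acts as $P_1\frac{d}{dz}$ on each subinterval). For $x\in X$ with $\mathcal{Q}_lx\in D(\mathcal{J}_l)$, set the boundary flow and effort $f_\partial=\frac1{\sqrt2}P_1[(\mathcal{Q}_lx)(b)-(\mathcal{Q}_lx)(a)]\in\mathbb{R}^2$, $e_\partial=\frac1{\sqrt2}[(\mathcal{Q}_lx)(b)+(\mathcal{Q}_lx)(a)]\in\mathbb{R}^2$, the interface flow $f_I=(\mathcal{Q}_lx)_2(l)$ and the interface effort $e_I=-[(\mathcal{Q}_lx)_1(l^+)-(\mathcal{Q}_lx)_1(l^-)]$,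 where $l^\pm$ denote one-sided limits. The operator $A_{\mathcal{Q}_l}$ has domain $D(A_{\mathcal{Q}_l})=\{x\in X:\ \mathcal{Q}_lx\in D(\mathcal{J}_l),\ f_I=re_I,\ W_B\begin{bmatrix}f_\partial\\ e_\partial\end{bmatrix}=0\}$ and acts by $A_{\mathcal{Q}_l}x=\mathcal{J}_l(\mathcal{Q}_lx)$. Finally $A(t):=A_{\mathcal{Q}_{l(t)}}$. *)

theory Defs
  imports "HOL-Analysis.Analysis"
begin

definition L2_on :: "real set \<Rightarrow> (real \<Rightarrow> real) \<Rightarrow> bool" where
  "L2_on S f \<longleftrightarrow> f \<in> borel_measurable (lebesgue_on S) \<and>
                  integrable (lebesgue_on S) (\<lambda>z. (f z)^2)"

(* y restricted to (c,d) lies in H^1((c,d)); u is its absolutely continuous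
   representative on [c,d] (giving boundary / one-sided values) and g its weak
   derivative in L^2(c,d). *)
definition H1_rep :: "real \<Rightarrow> real \<Rightarrow> (real \<Rightarrow> real) \<Rightarrow> (real \<Rightarrow> real) \<Rightarrow> (real \<Rightarrow> real) \<Rightarrow> bool" where
  "H1_rep c d y u g \<longleftrightarrow> L2_on {c..d} g \<and>
     (\<forall>z\<in>{c..d}. u z = u c + integral\<^sup>L (lebesgue_on {c..z}) g) \<and>
     (AE z in lebesgue_on {c<..<d}. y z = u z)"

(* diagonal entry of the multiplication operator Q_l: Q^- left of l, Q^+ right of l
   (the value at the single point z = l is irrelevant) *)
definition Qd :: "real \<Rightarrow> (real \<Rightarrow> real) \<Rightarrow> (real \<Rightarrow> real) \<Rightarrow> real \<Rightarrow> real" where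
  "Qd l qm qp z = (if z < l then qm z else qp z)"

definition Sigma :: "real^4^4" where
  "Sigma = vector [vector [0,0,1,0], vector [0,0,0,1], vector [1,0,0,0], vector [0,1,0,0]]"

(* graph of the operator A_{Q_l}:  A_graph ... l x1 x2 y1 y2  means
   x = (x1,x2) \<in> D(A_{Q_l}) and A_{Q_l} x = (y1,y2) in X. *)
definition A_graph ::
  "real \<Rightarrow> real \<Rightarrow> (real \<Rightarrow> real) \<Rightarrow> (real \<Rightarrow> real) \<Rightarrow> (real \<Rightarrow> real) \<Rightarrow> (real \<Rightarrow> real) \<Rightarrow>
   real \<Rightarrow> real^4^2 \<Rightarrow> real \<Rightarrow>
   (real \<Rightarrow> real) \<Rightarrow> (real \<Rightarrow> real) \<Rightarrow> (real \<Rightarrow> real) \<Rightarrow> (real \<Rightarrow> real) \<Rightarrow> bool" where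
  "A_graph a b q11m q22m q11p q22p r WB l x1 x2 y1 y2 \<longleftrightarrow>
     L2_on {a..b} x1 \<and> L2_on {a..b} x2 \<and> L2_on {a..b} y1 \<and> L2_on {a..b} y2 \<and>
     (\<exists>u1m g1m u1p g1p u2 g2.
        H1_rep a l (\<lambda>z. Qd l q11m q11p z * x1 z) u1m g1m \<and>
        H1_rep l b (\<lambda>z. Qd l q11m q11p z * x1 z) u1p g1p \<and>
        H1_rep a b (\<lambda>z. Qd l q22m q22p z * x2 z) u2 g2 \<and>
        (let fI = u2 l;
             eI = - (u1p l - u1m l);
             fd1 = - (u2 b - u2 a) / sqrt 2;
             fd2 = - (u1p b - u1m a) / sqrt 2;
             ed1 = (u1p b + u1m a) / sqrt 2;
             ed2 = (u2 b + u2 a) / sqrt 2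
         in fI = r * eI \<and> WB *v vector [fd1, fd2, ed1, ed2] = 0) \<and>
        (AE z in lebesgue_on {a..b}.
            y1 z = - g2 z \<and> y2 z = - (if z < l then g1m z else g1p z)))"

definition ipQ0 ::
  "real \<Rightarrow> real \<Rightarrow> (real \<Rightarrow> real) \<Rightarrow> (real \<Rightarrow> real) \<Rightarrow> (real \<Rightarrow> real) \<Rightarrow> (real \<Rightarrow> real) \<Rightarrow>
   (real \<Rightarrow> real) \<Rightarrow> (real \<Rightarrow> real) \<Rightarrow> (real \<Rightarrow> real) \<Rightarrow> (real \<Rightarrow> real) \<Rightarrow> real" where
  "ipQ0 a b q11m q22m q11p q22p x1 x2 y1 y2 =
     1/2 * integral\<^sup>L (lebesgue_on {a..b})
       (\<lambda>z. y1 z * (Qd 0 q11m q11p z * x1 z) + y2 z * (Qd 0 q22m q22p z * x2 z))"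

definition C1_on_interval :: "real \<Rightarrow> real \<Rightarrow> (real \<Rightarrow> real) \<Rightarrow> bool" where
  "C1_on_interval c d f \<longleftrightarrow> (\<exists>f'. continuous_on {c..d} f' \<and>
      (\<forall>z\<in>{c..d}. (f has_real_derivative f' z) (at z within {c..d})))"

end

theory Submission
  imports Defs
begin

(*
  Let u = Q_l x.  Its first component is absolutely continuous on each side of the interface l,
  its second one on all of [a,b], and the interface condition with r = 0 says u2(l) = 0.  On each
  side of l the diagonal matrix Q_0 is a scalar multiple w Q_l of Q_l: w = 1 outside the segment
  between 0 and l, and w = q11+/q11- (resp. q11-/q11+) on it, the same scalar for both entries by
  the ratio hypothesis.  Hence 2 <A x, x>_{Q_0} = - integral of w (u1 u2)', and integration by
  parts on [a,l] and [l,b] leaves the boundary term u1(a) u2(a) - u1(b) u2(b), which is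
  nonpositive by the condition on W_B, plus the integral of w' u1 u2; the interface terms vanish
  because u2(l) = 0.  Since w is continuous at 0 (q11+(0) = q11-(0)) and equals 1 at a and b,
  and |w'| is bounded independently of l, the remaining integral is at most
  sup|w'| M^2/2 ||x||^2_{L^2}, which is bounded by a multiple of ||x||^2_{Q_0} uniformly in t.
*)

section \<open>Indefinite integrals and integration by parts\<close>

definition indef_integral_on :: "real \<Rightarrow> real \<Rightarrow> (real \<Rightarrow> real) \<Rightarrow> (real \<Rightarrow> real) \<Rightarrow> bool" where
  "indef_integral_on c d u g \<longleftrightarrow>
     set_integrable lborel {c..d} g \<and> (\<forall>z\<in>{c..d}. u z = u c + (LBINT x:{c..z}. g x))"

lemma indef_integral_onD:
  assumes "indef_integral_on c d u g"
  shows "set_integrable lborel {c..d} g"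
    and "z \<in> {c..d} \<Longrightarrow> u z = u c + (LBINT x:{c..z}. g x)"
  using assms unfolding indef_integral_on_def by blast+

lemma integral_mult_eq_triangle_sum:
  fixes G H :: "real \<Rightarrow> real"
  assumes G: "integrable lborel G" and H: "integrable lborel H"
  shows "integrable lborel (\<lambda>s. G s * (LBINT t:{..s}. H t))"
    and "integrable lborel (\<lambda>t. H t * (LBINT s:{..<t}. G s))"
    and "integral\<^sup>L lborel G * integral\<^sup>L lborel H =
           (LINT s|lborel. G s * (LBINT t:{..s}. H t)) + (LINT t|lborel. H t * (LBINT s:{..<t}. G s))"
proof -
  have [measurable]: "G \<in> borel_measurable borel" "H \<in> borel_measurable borel"
    using G H by auto
  define F where "F = (\<lambda>(s::real, t::real). G s * H t)"
  define Upper where "Upper = (\<lambda>(s::real, t::real). if s < t then G s * H t else 0)"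
  define Lower where "Lower = (\<lambda>(s::real, t::real). if s < t then 0 else G s * H t)"
  have [measurable]: "F \<in> borel_measurable (lborel \<Otimes>\<^sub>M lborel)"
    "Upper \<in> borel_measurable (lborel \<Otimes>\<^sub>M lborel)" "Lower \<in> borel_measurable (lborel \<Otimes>\<^sub>M lborel)"
    unfolding F_def Upper_def Lower_def by measurable
  have F_int: "integrable (lborel \<Otimes>\<^sub>M lborel) F"
    by (rule lborel_pair.Fubini_integrable) (auto simp: F_def abs_mult G H)
  have Upper_int: "integrable (lborel \<Otimes>\<^sub>M lborel) Upper"
    by (rule Bochner_Integration.integrable_bound[OF F_int]) (auto simp: Upper_def F_def)
  have Lower_int: "integrable (lborel \<Otimes>\<^sub>M lborel) Lower"
    by (rule Bochner_Integration.integrable_bound[OF F_int]) (auto simp: Lower_def F_def)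
  have Lower_slice: "(LINT t|lborel. Lower (s, t)) = G s * (LBINT t:{..s}. H t)" for s
    unfolding set_lebesgue_integral_def Lower_def
    by (subst integral_mult_right_zero[symmetric], rule Bochner_Integration.integral_cong)
       (auto split: split_indicator)
  have Upper_slice: "(LINT s|lborel. Upper (s, t)) = H t * (LBINT s:{..<t}. G s)" for t
    unfolding set_lebesgue_integral_def Upper_def
    by (subst integral_mult_right_zero[symmetric], rule Bochner_Integration.integral_cong)
       (auto split: split_indicator)
  show "integrable lborel (\<lambda>s. G s * (LBINT t:{..s}. H t))"
    using lborel_pair.integrable_fst'[OF Lower_int] by (simp add: Lower_slice)
  show "integrable lborel (\<lambda>t. H t * (LBINT s:{..<t}. G s))"
    using lborel_pair.integrable_snd[of "\<lambda>s t. Upper (s, t)"] Upper_int by (simp add: Upper_slice)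
  have "integral\<^sup>L lborel G * integral\<^sup>L lborel H = integral\<^sup>L (lborel \<Otimes>\<^sub>M lborel) F"
    using lborel_pair.integral_fst'[OF F_int] by (simp add: F_def)
  also have "\<dots> = integral\<^sup>L (lborel \<Otimes>\<^sub>M lborel) Lower + integral\<^sup>L (lborel \<Otimes>\<^sub>M lborel) Upper"
    by (subst Bochner_Integration.integral_add[OF Lower_int Upper_int, symmetric])
       (auto simp: F_def Lower_def Upper_def intro!: arg_cong[where f="integral\<^sup>L _"])
  also have "\<dots> = (LINT s|lborel. G s * (LBINT t:{..s}. H t)) + (LINT t|lborel. H t * (LBINT s:{..<t}. G s))"
    using lborel_pair.integral_fst'[OF Lower_int] lborel_pair.integral_snd[of "\<lambda>s t. Upper (s, t)"] Upper_int
    by (simp add: Lower_slice Upper_slice)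
  finally show "integral\<^sup>L lborel G * integral\<^sup>L lborel H =
      (LINT s|lborel. G s * (LBINT t:{..s}. H t)) + (LINT t|lborel. H t * (LBINT s:{..<t}. G s))" .
qed

lemma set_integral_mult_eq_triangle_sum:
  fixes g h :: "real \<Rightarrow> real"
  assumes g: "set_integrable lborel {c..z} g" and h: "set_integrable lborel {c..z} h"
  shows "set_integrable lborel {c..z} (\<lambda>s. g s * (LBINT t:{c..s}. h t))"
    and "set_integrable lborel {c..z} (\<lambda>s. h s * (LBINT t:{c..s}. g t))"
    and "(LBINT s:{c..z}. g s) * (LBINT s:{c..z}. h s) =
           (LBINT s:{c..z}. g s * (LBINT t:{c..s}. h t)) + (LBINT s:{c..z}. h s * (LBINT t:{c..s}. g t))"
proof -
  define G where "G s = indicator {c..z} s * g s" for s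
  define H where "H s = indicator {c..z} s * h s" for s
  have G_int: "integrable lborel G" and H_int: "integrable lborel H"
    using g h by (simp_all add: G_def[abs_def] H_def[abs_def] set_integrable_def)
  have H_upto: "G s * (LBINT t:{..s}. H t) = indicator {c..z} s * (g s * (LBINT t:{c..s}. h t))" for s
    by (cases "s \<in> {c..z}")
       (auto simp: G_def H_def set_lebesgue_integral_def split: split_indicator
             intro!: Bochner_Integration.integral_cong)
  have G_below: "H t * (LBINT s:{..<t}. G s) = indicator {c..z} t * (h t * (LBINT s:{c..t}. g s))" for t
  proof (cases "t \<in> {c..z}")
    case True
    have "(LBINT s:{..<t}. G s) = (LBINT s:{c..<t}. g s)"
      using True by (auto simp: G_def set_lebesgue_integral_def split: split_indicator
               intro!: Bochner_Integration.integral_cong)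
    also have "\<dots> = (LBINT s:{c..t}. g s)"
      using True by (simp flip: interval_integral_Ico interval_integral_Icc)
    finally show ?thesis using True by (simp add: H_def)
  qed (simp add: H_def)
  note triangles = integral_mult_eq_triangle_sum[OF G_int H_int, unfolded H_upto G_below]
  show "set_integrable lborel {c..z} (\<lambda>s. g s * (LBINT t:{c..s}. h t))"
    and "set_integrable lborel {c..z} (\<lambda>s. h s * (LBINT t:{c..s}. g t))"
    using triangles(1,2) by (simp_all add: set_integrable_def)
  show "(LBINT s:{c..z}. g s) * (LBINT s:{c..z}. h s) =
      (LBINT s:{c..z}. g s * (LBINT t:{c..s}. h t)) + (LBINT s:{c..z}. h s * (LBINT t:{c..s}. g t))"
    using triangles(3) by (simp add: set_lebesgue_integral_def G_def[abs_def] H_def[abs_def])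
qed

lemma indef_integral_product_rule:
  assumes u: "indef_integral_on c d u g" and v: "indef_integral_on c d v h" and z: "z \<in> {c..d}"
  shows "set_integrable lborel {c..z} (\<lambda>s. g s * v s)"
    and "set_integrable lborel {c..z} (\<lambda>s. u s * h s)"
    and "u z * v z = u c * v c + (LBINT s:{c..z}. g s * v s + u s * h s)"
proof -
  have g_int: "set_integrable lborel {c..z} g"
    by (rule set_integrable_subset[OF indef_integral_onD(1)[OF u]]) (use z in auto)
  have h_int: "set_integrable lborel {c..z} h"
    by (rule set_integrable_subset[OF indef_integral_onD(1)[OF v]]) (use z in auto)
  note triangles = set_integral_mult_eq_triangle_sum[OF g_int h_int]
  have u_eq: "u s = u c + (LBINT t:{c..s}. g t)" if "s \<in> {c..z}" for s
    by (rule indef_integral_onD(2)[OF u]) (use z that in auto)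
  have v_eq: "v s = v c + (LBINT t:{c..s}. h t)" if "s \<in> {c..z}" for s
    by (rule indef_integral_onD(2)[OF v]) (use z that in auto)
  have gv_eq: "g s * (LBINT t:{c..s}. h t) + v c * g s = g s * v s"
    and uh_eq: "h s * (LBINT t:{c..s}. g t) + u c * h s = u s * h s" if "s \<in> {c..z}" for s
    using u_eq[OF that] v_eq[OF that] by (simp_all add: algebra_simps)
  have gv_expanded_int: "set_integrable lborel {c..z} (\<lambda>s. g s * (LBINT t:{c..s}. h t) + v c * g s)"
    and uh_expanded_int: "set_integrable lborel {c..z} (\<lambda>s. h s * (LBINT t:{c..s}. g t) + u c * h s)"
    using triangles(1,2) g_int h_int by auto
  show gv_int: "set_integrable lborel {c..z} (\<lambda>s. g s * v s)"
    using gv_expanded_int by (rule set_integrable_cong[THEN iffD1, OF refl refl, rotated]) (rule gv_eq)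
  show uh_int: "set_integrable lborel {c..z} (\<lambda>s. u s * h s)"
    using uh_expanded_int by (rule set_integrable_cong[THEN iffD1, OF refl refl, rotated]) (rule uh_eq)
  have "(LBINT s:{c..z}. g s * v s) = (LBINT s:{c..z}. g s * (LBINT t:{c..s}. h t) + v c * g s)"
    "(LBINT s:{c..z}. u s * h s) = (LBINT s:{c..z}. h s * (LBINT t:{c..s}. g t) + u c * h s)"
    by (rule set_lebesgue_integral_cong, simp, use gv_eq uh_eq in metis)+
  then have integrals:
    "(LBINT s:{c..z}. g s * v s) = (LBINT s:{c..z}. g s * (LBINT t:{c..s}. h t)) + v c * (LBINT s:{c..z}. g s)"
    "(LBINT s:{c..z}. u s * h s) = (LBINT s:{c..z}. h s * (LBINT t:{c..s}. g t)) + u c * (LBINT s:{c..z}. h s)"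
    using triangles(1,2) g_int h_int by (simp_all add: set_integral_add)
  have z_mem: "z \<in> {c..z}"
    using z by simp
  show "u z * v z = u c * v c + (LBINT s:{c..z}. g s * v s + u s * h s)"
    unfolding set_integral_add(2)[OF gv_int uh_int] integrals u_eq[OF z_mem] v_eq[OF z_mem]
    using triangles(3) by algebra
qed

lemma indef_integral_mult:
  assumes u: "indef_integral_on c d u g" and v: "indef_integral_on c d v h" and "c \<le> d"
  shows "indef_integral_on c d (\<lambda>z. u z * v z) (\<lambda>z. g z * v z + u z * h z)"
    and "set_integrable lborel {c..d} (\<lambda>z. g z * v z)"
    and "set_integrable lborel {c..d} (\<lambda>z. u z * h z)"
proof -
  show "set_integrable lborel {c..d} (\<lambda>z. g z * v z)" "set_integrable lborel {c..d} (\<lambda>z. u z * h z)"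
    using indef_integral_product_rule(1,2)[OF u v, of d] \<open>c \<le> d\<close> by auto
  then show "indef_integral_on c d (\<lambda>z. u z * v z) (\<lambda>z. g z * v z + u z * h z)"
    unfolding indef_integral_on_def using indef_integral_product_rule(3)[OF u v]
    by (intro conjI set_integral_add(1) ballI) blast+
qed

lemma indef_integral_by_parts:
  assumes w: "indef_integral_on c d w w'" and u: "indef_integral_on c d u g"
    and v: "indef_integral_on c d v h" and "c \<le> d"
  shows "set_integrable lborel {c..d} (\<lambda>s. w' s * (u s * v s))"
    and "set_integrable lborel {c..d} (\<lambda>s. w s * (g s * v s + u s * h s))"
    and "(LBINT s:{c..d}. w s * (g s * v s + u s * h s)) =
           w d * (u d * v d) - w c * (u c * v c) - (LBINT s:{c..d}. w' s * (u s * v s))"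
proof -
  note wuv = indef_integral_mult[OF w indef_integral_mult(1)[OF u v \<open>c \<le> d\<close>] \<open>c \<le> d\<close>]
  show w'_int: "set_integrable lborel {c..d} (\<lambda>s. w' s * (u s * v s))"
    and w_int: "set_integrable lborel {c..d} (\<lambda>s. w s * (g s * v s + u s * h s))"
    using wuv(2,3) .
  have "w d * (u d * v d) =
      w c * (u c * v c) + (LBINT s:{c..d}. w' s * (u s * v s) + w s * (g s * v s + u s * h s))"
    by (rule indef_integral_onD(2)[OF wuv(1)]) (use \<open>c \<le> d\<close> in simp)
  also have "\<dots> = w c * (u c * v c) + (LBINT s:{c..d}. w' s * (u s * v s))
      + (LBINT s:{c..d}. w s * (g s * v s + u s * h s))"
    using w'_int w_int by (simp add: set_integral_add)
  finally show "(LBINT s:{c..d}. w s * (g s * v s + u s * h s)) =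
      w d * (u d * v d) - w c * (u c * v c) - (LBINT s:{c..d}. w' s * (u s * v s))"
    by linarith
qed

lemma set_integral_Icc_split:
  fixes g :: "real \<Rightarrow> real"
  assumes g: "set_integrable lborel {c..z} g" and "c \<le> e" "e \<le> z"
  shows "(LBINT x:{c..z}. g x) = (LBINT x:{c..e}. g x) + (LBINT x:{e..z}. g x)"
proof -
  have "interval_lebesgue_integrable lborel (ereal c) (ereal z) g"
    unfolding interval_lebesgue_integrable_def using assms
    by (auto intro: set_integrable_subset[OF g])
  then have "(LBINT x=c..e. g x) + (LBINT x=e..z. g x) = (LBINT x=c..z. g x)"
    using assms by (intro interval_integral_sum) (simp add: min_def max_def)
  then show ?thesis
    using assms by (simp add: interval_integral_Icc)
qed

lemma indef_integral_subinterval: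
  assumes u: "indef_integral_on c d u g" and "c \<le> c'" "c' \<le> d'" "d' \<le> d"
  shows "indef_integral_on c' d' u g"
  unfolding indef_integral_on_def
proof (intro conjI ballI)
  show "set_integrable lborel {c'..d'} g"
    by (rule set_integrable_subset[OF indef_integral_onD(1)[OF u]]) (use assms in auto)
  fix z assume z: "z \<in> {c'..d'}"
  have "u z = u c + (LBINT x:{c..z}. g x)"
    by (rule indef_integral_onD(2)[OF u]) (use assms z in auto)
  also have "(LBINT x:{c..z}. g x) = (LBINT x:{c..c'}. g x) + (LBINT x:{c'..z}. g x)"
    using assms z by (intro set_integral_Icc_split set_integrable_subset[OF indef_integral_onD(1)[OF u]]) auto
  also have "u c = u c' - (LBINT x:{c..c'}. g x)"
    using indef_integral_onD(2)[OF u, of c'] assms by simp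
  finally show "u z = u c' + (LBINT x:{c'..z}. g x)"
    by simp
qed

lemma set_integral_if_split:
  fixes g h :: "real \<Rightarrow> real"
  assumes g: "set_integrable lborel {c..e} g" and h: "set_integrable lborel {e..d} h"
    and "c \<le> e" and "e \<le> d"
  shows "set_integrable lborel {c..d} (\<lambda>z. if z < e then g z else h z)"
    and "(LBINT z:{c..d}. if z < e then g z else h z) = (LBINT z:{c..e}. g z) + (LBINT z:{e..d}. h z)"
proof -
  let ?k = "\<lambda>z. if z < e then g z else h z"
  have left_int: "set_integrable lborel {c..<e} ?k"
    using set_integrable_subset[OF g, of "{c..<e}"]
    by (rule set_integrable_cong[THEN iffD1, OF refl refl, rotated]) auto
  have right_int: "set_integrable lborel {e..d} ?k"
    using h by (rule set_integrable_cong[THEN iffD1, OF refl refl, rotated]) auto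
  have "{c..d} = {c..<e} \<union> {e..d}"
    using assms by auto
  with set_integrable_Un[OF left_int right_int] show k_int: "set_integrable lborel {c..d} ?k"
    by simp
  have "(LBINT z:{c..e}. ?k z) = (LBINT z:{c..<e}. ?k z)"
    using assms by (simp flip: interval_integral_Icc interval_integral_Ico)
  also have "\<dots> = (LBINT z:{c..<e}. g z)"
    by (intro set_lebesgue_integral_cong) auto
  also have "\<dots> = (LBINT z:{c..e}. g z)"
    using assms by (simp flip: interval_integral_Icc interval_integral_Ico)
  finally have "(LBINT z:{c..e}. ?k z) = (LBINT z:{c..e}. g z)" .
  moreover have "(LBINT z:{e..d}. ?k z) = (LBINT z:{e..d}. h z)"
    by (intro set_lebesgue_integral_cong) auto
  ultimately show "(LBINT z:{c..d}. ?k z) = (LBINT z:{c..e}. g z) + (LBINT z:{e..d}. h z)"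
    using set_integral_Icc_split[OF k_int] assms by simp
qed

lemma indef_integral_glue:
  assumes u: "indef_integral_on c e u g" and v: "indef_integral_on e d v h"
    and "u e = v e" and "c \<le> e" and "e \<le> d"
  shows "indef_integral_on c d (\<lambda>z. if z < e then u z else v z) (\<lambda>z. if z < e then g z else h z)"
  unfolding indef_integral_on_def
proof (intro conjI ballI)
  let ?f = "\<lambda>z. if z < e then u z else v z" and ?k = "\<lambda>z. if z < e then g z else h z"
  note g_int = indef_integral_onD(1)[OF u] and h_int = indef_integral_onD(1)[OF v]
  show "set_integrable lborel {c..d} ?k"
    using set_integral_if_split(1)[OF g_int h_int] assms by blast
  have f_c: "?f c = u c"
    using assms by auto
  fix z assume z: "z \<in> {c..d}"
  show "?f z = ?f c + (LBINT x:{c..z}. ?k x)"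
  proof (cases "z < e")
    case True
    have "(LBINT x:{c..z}. ?k x) = (LBINT x:{c..z}. g x)"
      using True by (intro set_lebesgue_integral_cong) auto
    with True z show ?thesis
      unfolding f_c using indef_integral_onD(2)[OF u, of z] by simp
  next
    case False
    have "(LBINT x:{c..z}. ?k x) = (LBINT x:{c..e}. g x) + (LBINT x:{e..z}. h x)"
      using False z assms
      by (intro set_integral_if_split(2) g_int set_integrable_subset[OF h_int]) auto
    with False z assms show ?thesis
      unfolding f_c using indef_integral_onD(2)[OF u, of e] indef_integral_onD(2)[OF v, of z] by simp
  qed
qed

lemma indef_integral_on_derivative:
  assumes f': "\<forall>z\<in>{c..d}. (f has_real_derivative f' z) (at z within S)"
    and "{c..d} \<subseteq> S" and cont: "continuous_on {c..d} f'"
  shows "indef_integral_on c d f f'"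
  unfolding indef_integral_on_def
proof (intro conjI ballI)
  show "set_integrable lborel {c..d} f'"
    by (rule borel_integrable_atLeastAtMost'[OF cont])
  fix z assume z: "z \<in> {c..d}"
  have "integral\<^sup>L lborel (\<lambda>x. indicator {c..z} x *\<^sub>R f' x) = f z - f c"
  proof (rule integral_FTC_atLeastAtMost)
    fix x assume "c \<le> x" "x \<le> z"
    then have "(f has_vector_derivative f' x) (at x within S)"
      using f' z by (simp add: has_real_derivative_iff_has_vector_derivative)
    then show "(f has_vector_derivative f' x) (at x within {c..z})"
      by (rule has_vector_derivative_within_subset) (use \<open>{c..d} \<subseteq> S\<close> z in auto)
  qed (use z in \<open>auto intro: continuous_on_subset[OF cont]\<close>)
  then show "f z = f c + (LBINT x:{c..z}. f' x)"
    by (simp add: set_lebesgue_integral_def)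
qed

section \<open>Dissipativity of the boundary port\<close>

lemma Sigma_mult_vector: "Sigma *v x = vector [x$3, x$4, x$1, x$2]"
  by (simp add: vec_eq_iff forall_4 Sigma_def matrix_vector_mult_def sum_4 vector_def)

lemma inner_real4: "(x::real^4) \<bullet> y = x$1 * y$1 + x$2 * y$2 + x$3 * y$3 + x$4 * y$4"
  by (simp add: inner_vec_def sum_4)

lemma Sigma_Sigma_mult [simp]: "Sigma *v (Sigma *v x) = x"
  by (simp add: Sigma_mult_vector vec_eq_iff forall_4 vector_def)

lemma inner_Sigma_commute: "(x::real^4) \<bullet> (Sigma *v y) = (Sigma *v x) \<bullet> y"
  by (simp add: Sigma_mult_vector inner_real4 vector_def algebra_simps)

lemma Sigma_form_antidiagonal:
  assumes "y$3 = - y$1" "y$4 = - y$2"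
  shows "y \<bullet> (Sigma *v y) = - 2 * ((y$1)\<^sup>2 + (y$2)\<^sup>2)"
  using assms by (simp add: Sigma_mult_vector inner_real4 vector_def power2_eq_square)

lemma Sigma_form_range_plus_kernel:
  fixes A :: "real^4^'m" and z :: "real^4"
  assumes "A *v z = 0"
  shows "(transpose A *v v + c *\<^sub>R (Sigma *v z)) \<bullet> (Sigma *v (transpose A *v v + c *\<^sub>R (Sigma *v z)))
           = v \<bullet> ((A ** Sigma ** transpose A) *v v) + c\<^sup>2 * (z \<bullet> (Sigma *v z))"
proof -
  have orth: "(transpose A *v v) \<bullet> z = 0"
    by (simp add: dot_lmul_matrix assms)
  have transpose_inner: "(transpose A *v x) \<bullet> y = x \<bullet> (A *v y)" for x y
    by (simp add: dot_lmul_matrix)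
  have "(transpose A *v v) \<bullet> (Sigma *v (transpose A *v v)) = v \<bullet> ((A ** Sigma ** transpose A) *v v)"
    by (simp only: transpose_inner matrix_vector_mul_assoc matrix_mul_assoc)
  moreover have "(Sigma *v z) \<bullet> (Sigma *v (transpose A *v v)) = 0"
    using orth by (simp add: inner_Sigma_commute inner_commute)
  moreover have "(Sigma *v z) \<bullet> (Sigma *v (Sigma *v z)) = z \<bullet> (Sigma *v z)"
    by (simp add: inner_commute)
  ultimately show ?thesis
    using orth
    by (simp add: matrix_vector_right_distrib matrix_vector_mult_scaleR inner_add_left inner_add_right
        power2_eq_square algebra_simps)
qed

lemma linear_nontrivial_kernel:
  fixes f :: "real^'n \<Rightarrow> real^'m"
  assumes "linear f" and "CARD('m) < CARD('n)"
  obtains x where "x \<noteq> 0" and "f x = 0"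
proof -
  have "rank (matrix f) \<le> min CARD('m) CARD('n)"
    by (rule rank_bound)
  then have "rank (matrix f) \<noteq> CARD('n)"
    using assms(2) by simp
  then obtain x where "x \<noteq> 0" "matrix f *v x = 0"
    using matrix_nonfull_linear_equations_eq by blast
  then show ?thesis
    using that matrix_vector_mul(2)[OF \<open>linear f\<close>] by metis
qed

lemma Sigma_form_nonpos_on_kernel:
  fixes WB :: "real^4^2" and z :: "real^4"
  assumes rank: "rank WB = 2" and pos: "\<forall>v::real^2. 0 \<le> v \<bullet> ((WB ** Sigma ** transpose WB) *v v)"
    and kernel: "WB *v z = 0"
  shows "z \<bullet> (Sigma *v z) \<le> 0"
proof (rule ccontr)
  assume "\<not> z \<bullet> (Sigma *v z) \<le> 0"
  then have z_pos: "0 < z \<bullet> (Sigma *v z)"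
    by simp
  \<comment> \<open>The Sigma-form is nonnegative on the 3-space spanned by the range of transpose WB and
      by Sigma z, but negative definite on the 2-space of vectors y with y3 = -y1, y4 = -y2;
      these two subspaces of a 4-space must meet nontrivially.\<close>
  define emb :: "real^3 \<Rightarrow> real^4" where
    "emb x = transpose WB *v vector [x$1, x$2] + x$3 *\<^sub>R (Sigma *v z)" for x
  have "linear (\<lambda>x. vector [emb x $ 1 + emb x $ 3, emb x $ 2 + emb x $ 4] :: real^2)"
    unfolding emb_def
    by (rule linearI) (simp_all add: vec_eq_iff forall_2 vector_def vector_matrix_mult_def sum_2
        matrix_vector_right_distrib matrix_vector_mult_scaleR algebra_simps)
  then obtain x where "x \<noteq> 0" and "vector [emb x $ 1 + emb x $ 3, emb x $ 2 + emb x $ 4] = (0::real^2)"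
    by (rule linear_nontrivial_kernel) simp_all
  then have antidiagonal: "emb x $ 3 = - emb x $ 1" "emb x $ 4 = - emb x $ 2"
    by (simp_all add: vec_eq_iff forall_2 vector_def add_eq_0_iff)
  define v :: "real^2" where "v = vector [x$1, x$2]"
  have form: "emb x \<bullet> (Sigma *v emb x) = v \<bullet> ((WB ** Sigma ** transpose WB) *v v) + (x$3)\<^sup>2 * (z \<bullet> (Sigma *v z))"
    unfolding emb_def v_def[symmetric] by (rule Sigma_form_range_plus_kernel[OF kernel])
  have "0 \<le> v \<bullet> ((WB ** Sigma ** transpose WB) *v v)" "0 \<le> (x$3)\<^sup>2 * (z \<bullet> (Sigma *v z))"
    using pos z_pos by simp_all
  moreover have "emb x \<bullet> (Sigma *v emb x) \<le> 0"
    unfolding Sigma_form_antidiagonal[OF antidiagonal] by simp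
  ultimately have x3_term: "(x$3)\<^sup>2 * (z \<bullet> (Sigma *v z)) = 0"
    and emb_form: "emb x \<bullet> (Sigma *v emb x) = 0"
    using form by linarith+
  have "x$3 = 0"
    using x3_term z_pos by simp
  have "(emb x $ 1)\<^sup>2 + (emb x $ 2)\<^sup>2 = 0"
    using emb_form Sigma_form_antidiagonal[OF antidiagonal] by (smt (verit))
  then have "emb x $ 1 = 0 \<and> emb x $ 2 = 0"
    by (rule sum_power2_eq_zero_iff[THEN iffD1])
  with \<open>x$3 = 0\<close> antidiagonal have "transpose WB *v v = 0"
    by (simp add: emb_def v_def vec_eq_iff forall_4)
  moreover have "inj ((*v) (transpose WB))"
    using full_rank_injective[of "transpose WB"] rank by (simp add: rank_transpose)
  ultimately have "v = 0"
    by (metis injD matrix_vector_mult_0_right)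
  then show False
    using \<open>x \<noteq> 0\<close> \<open>x$3 = 0\<close> by (simp add: v_def vec_eq_iff forall_2 forall_3 vector_def)
qed

lemma boundary_port_dissipative:
  fixes WB :: "real^4^2"
  assumes "rank WB = 2" and "\<forall>v::real^2. 0 \<le> v \<bullet> ((WB ** Sigma ** transpose WB) *v v)"
    and "WB *v vector [- (p2 - q2) / sqrt 2, - (p1 - q1) / sqrt 2, (p1 + q1) / sqrt 2, (p2 + q2) / sqrt 2] = 0"
  shows "q1 * q2 \<le> p1 * p2"
proof -
  let ?z = "vector [- (p2 - q2) / sqrt 2, - (p1 - q1) / sqrt 2, (p1 + q1) / sqrt 2, (p2 + q2) / sqrt 2] :: real^4"
  have "?z \<bullet> (Sigma *v ?z) = - 2 * (p1 * p2 - q1 * q2)"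
    by (simp add: Sigma_mult_vector inner_real4 vector_def field_simps)
  with Sigma_form_nonpos_on_kernel[OF assms] show ?thesis
    by simp
qed

section \<open>Absolutely continuous representatives\<close>

lemma AE_lebesgue_on_superset:
  fixes S T :: "real set"
  assumes "AE z in lebesgue_on S. P z" and "S \<in> sets lebesgue" and "T \<in> sets lebesgue"
  shows "AE z in lebesgue_on T. z \<in> S \<longrightarrow> P z"
  using assms by (auto simp: AE_restrict_space_iff elim!: eventually_mono)

lemma AE_lebesgue_on_Icc_neq:
  fixes c d p :: real
  shows "AE z in lebesgue_on {c..d}. z \<noteq> p"
  using AE_completion[OF AE_lborel_singleton[of p]]
  by (subst AE_restrict_space_iff) (auto elim!: eventually_mono)

lemma AE_lebesgue_on_Icc_interior:
  fixes c d :: real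
  shows "AE z in lebesgue_on {c..d}. z \<in> {c<..<d}"
proof -
  have "AE z in lebesgue. z \<in> {c..d} \<longrightarrow> z \<in> {c<..<d}"
    using AE_completion[OF AE_lborel_singleton[of c]] AE_completion[OF AE_lborel_singleton[of d]]
    by eventually_elim auto
  then show ?thesis
    by (subst AE_restrict_space_iff) auto
qed

lemma L2_on_borel_representative:
  fixes g :: "real \<Rightarrow> real"
  assumes "L2_on {c..d} g"
  obtains g' where "set_integrable lborel {c..d} g'" and "AE z in lebesgue_on {c..d}. g z = g' z"
    and "\<And>z. z \<in> {c..d} \<Longrightarrow> integral\<^sup>L (lebesgue_on {c..z}) g = (LBINT x:{c..z}. g' x)"
proof -
  have g_meas: "g \<in> borel_measurable (lebesgue_on {c..d})"
    and g_square: "integrable (lebesgue_on {c..d}) (\<lambda>z. (g z)\<^sup>2)"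
    using assms unfolding L2_on_def by blast+
  have "integrable (lebesgue_on {c..d}) g"
    by (rule finite_measure.square_integrable_imp_integrable[OF finite_measure_lebesgue_on g_meas g_square])
       auto
  then have g_int: "integrable lebesgue (\<lambda>x. indicator {c..d} x * g x)"
    by (simp add: integrable_restrict_space)
  then have "(\<lambda>x. indicator {c..d} x * g x) \<in> borel_measurable (completion lborel)"
    by (rule borel_measurable_integrable)
  then obtain g' where g'_borel: "g' \<in> borel_measurable lborel"
    and "AE x in lborel. indicator {c..d} x * g x = g' x"
    using completion_ex_borel_measurable_real by blast
  then have g'_ae: "AE x in lebesgue. indicator {c..d} x * g x = g' x"
    by (intro AE_completion)
  have g'_lebesgue: "g' \<in> borel_measurable lebesgue"
    using g'_borel by (rule measurable_completion)
  have "integrable lebesgue g'"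
    using g_int integrable_cong_AE[OF borel_measurable_integrable[OF g_int] g'_lebesgue g'_ae] by simp
  then have "integrable lborel g'"
    using integrable_completion[OF g'_borel] by simp
  then have "set_integrable lborel {c..d} g'"
    unfolding set_integrable_def by (rule integrable_mult_indicator[rotated]) simp
  then show ?thesis
  proof (rule that)
    show "AE z in lebesgue_on {c..d}. g z = g' z"
      using g'_ae by (auto simp: AE_restrict_space_iff elim!: eventually_mono)
    fix z assume "z \<in> {c..d}"
    have "(LBINT x:{c..z}. g' x) = integral\<^sup>L lebesgue (\<lambda>x. indicator {c..z} x * g' x)"
      using g'_borel by (simp add: set_lebesgue_integral_def integral_completion)
    also have "\<dots> = integral\<^sup>L lebesgue (\<lambda>x. indicator {c..z} x * (indicator {c..d} x * g x))"
      using g'_ae g'_lebesgue borel_measurable_integrable[OF g_int]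
      by (intro integral_cong_AE) (auto intro!: borel_measurable_times borel_measurable_indicator elim!: eventually_mono)
    also have "\<dots> = integral\<^sup>L (lebesgue_on {c..z}) g"
      using \<open>z \<in> {c..d}\<close> by (auto simp: integral_restrict_space indicator_def intro!: Bochner_Integration.integral_cong)
    finally show "integral\<^sup>L (lebesgue_on {c..z}) g = (LBINT x:{c..z}. g' x)"
      by simp
  qed
qed

lemma H1_rep_imp_indef_integral:
  assumes H: "H1_rep c d y u g"
  obtains g' where "indef_integral_on c d u g'" and "AE z in lebesgue_on {c..d}. y z = u z \<and> g z = g' z"
proof -
  obtain g' where g'_int: "set_integrable lborel {c..d} g'" and g'_ae: "AE z in lebesgue_on {c..d}. g z = g' z"
    and g'_integral: "\<And>z. z \<in> {c..d} \<Longrightarrow> integral\<^sup>L (lebesgue_on {c..z}) g = (LBINT x:{c..z}. g' x)"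
    using L2_on_borel_representative H unfolding H1_rep_def by blast
  have "indef_integral_on c d u g'"
    unfolding indef_integral_on_def
  proof (intro conjI ballI g'_int)
    fix z assume "z \<in> {c..d}"
    then show "u z = u c + (LBINT x:{c..z}. g' x)"
      using H unfolding H1_rep_def g'_integral[OF \<open>z \<in> {c..d}\<close>, symmetric] by blast
  qed
  moreover have "AE z in lebesgue_on {c<..<d}. y z = u z"
    using H unfolding H1_rep_def by blast
  then have "AE z in lebesgue_on {c..d}. z \<in> {c<..<d} \<longrightarrow> y z = u z"
    by (rule AE_lebesgue_on_superset) auto
  then have "AE z in lebesgue_on {c..d}. y z = u z \<and> g z = g' z"
    using g'_ae AE_lebesgue_on_Icc_interior by eventually_elim auto
  ultimately show ?thesis
    by (rule that)
qed

section \<open>The estimate for a fixed interface position\<close>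

lemma set_integrable_imp_lebesgue_on:
  fixes f :: "real \<Rightarrow> real"
  assumes f: "set_integrable lborel S f" and "S \<in> sets lborel"
  shows "integrable (lebesgue_on S) f" and "integral\<^sup>L (lebesgue_on S) f = (LBINT z:S. f z)"
proof -
  have S: "S \<in> sets lebesgue"
    using assms(2) by (simp add: sets_completionI_sets)
  have borel: "(\<lambda>z. indicator S z *\<^sub>R f z) \<in> borel_measurable lborel"
    using f by (simp add: set_integrable_def)
  show "integrable (lebesgue_on S) f"
    using f S borel by (simp add: integrable_restrict_space integrable_completion set_integrable_def)
  show "integral\<^sup>L (lebesgue_on S) f = (LBINT z:S. f z)"
    using S borel by (simp add: integral_restrict_space integral_completion set_lebesgue_integral_def)
qed

lemma integral_lebesgue_on_if_split:
  fixes f1 f2 :: "real \<Rightarrow> real"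
  assumes "set_integrable lborel {a..L} f1" and "set_integrable lborel {L..b} f2"
    and "a \<le> L" and "L \<le> b"
  shows "integrable (lebesgue_on {a..b}) (\<lambda>z. if z < L then f1 z else f2 z)"
    and "integral\<^sup>L (lebesgue_on {a..b}) (\<lambda>z. if z < L then f1 z else f2 z)
           = (LBINT z:{a..L}. f1 z) + (LBINT z:{L..b}. f2 z)"
  using set_integrable_imp_lebesgue_on[OF set_integral_if_split(1)[OF assms]]
    set_integral_if_split(2)[OF assms] by simp_all

lemma Qd_borel_measurable:
  assumes "continuous_on {a..b} qm" and "continuous_on {a..b} qp"
  shows "Qd l qm qp \<in> borel_measurable (lebesgue_on {a..b})"
proof -
  have "qm \<in> borel_measurable (lebesgue_on {a..b})" "qp \<in> borel_measurable (lebesgue_on {a..b})"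
    using assms by (auto intro: continuous_imp_measurable_on_sets_lebesgue)
  then have "(\<lambda>z. if z < l then qm z else qp z) \<in> borel_measurable (lebesgue_on {a..b})"
    by (rule measurable_If) (auto simp: sets_restrict_space_iff)
  then show ?thesis
    unfolding Qd_def[abs_def] .
qed

lemma A_graph_primitives:
  assumes A: "A_graph a b q11m q22m q11p q22p 0 WB L x1 x2 y1 y2" and "a < L" and "L < b"
    and "rank WB = 2" and "\<forall>v::real^2. 0 \<le> v \<bullet> ((WB ** Sigma ** transpose WB) *v v)"
  obtains u1m G1m u1p G1p u2 G2 where
    "indef_integral_on a L u1m G1m" and "indef_integral_on L b u1p G1p" and "indef_integral_on a b u2 G2"
    and "u2 L = 0" and "u1m a * u2 a \<le> u1p b * u2 b"
    and "AE z in lebesgue_on {a..b}.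
           (z < L \<longrightarrow> Qd L q11m q11p z * x1 z = u1m z \<and> y2 z = - G1m z) \<and>
           (L < z \<longrightarrow> Qd L q11m q11p z * x1 z = u1p z \<and> y2 z = - G1p z) \<and>
           Qd L q22m q22p z * x2 z = u2 z \<and> y1 z = - G2 z"
proof -
  from A[unfolded A_graph_def] obtain u1m g1m u1p g1p u2 g2 where
    H1m: "H1_rep a L (\<lambda>z. Qd L q11m q11p z * x1 z) u1m g1m" and
    H1p: "H1_rep L b (\<lambda>z. Qd L q11m q11p z * x1 z) u1p g1p" and
    H2: "H1_rep a b (\<lambda>z. Qd L q22m q22p z * x2 z) u2 g2" and
    ports: "u2 L = 0 * - (u1p L - u1m L)"
      "WB *v vector [- (u2 b - u2 a) / sqrt 2, - (u1p b - u1m a) / sqrt 2,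
                     (u1p b + u1m a) / sqrt 2, (u2 b + u2 a) / sqrt 2] = 0" and
    y_eq: "AE z in lebesgue_on {a..b}. y1 z = - g2 z \<and> y2 z = - (if z < L then g1m z else g1p z)"
    by (auto simp: Let_def)
  obtain G1m where G1m: "indef_integral_on a L u1m G1m"
    and ae1m: "AE z in lebesgue_on {a..L}. Qd L q11m q11p z * x1 z = u1m z \<and> g1m z = G1m z"
    using H1_rep_imp_indef_integral[OF H1m] by blast
  obtain G1p where G1p: "indef_integral_on L b u1p G1p"
    and ae1p: "AE z in lebesgue_on {L..b}. Qd L q11m q11p z * x1 z = u1p z \<and> g1p z = G1p z"
    using H1_rep_imp_indef_integral[OF H1p] by blast
  obtain G2 where G2: "indef_integral_on a b u2 G2"
    and ae2: "AE z in lebesgue_on {a..b}. Qd L q22m q22p z * x2 z = u2 z \<and> g2 z = G2 z"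
    using H1_rep_imp_indef_integral[OF H2] by blast
  show ?thesis
  proof (rule that[OF G1m G1p G2])
    show "u2 L = 0"
      using ports(1) by simp
    show "u1m a * u2 a \<le> u1p b * u2 b"
      by (rule boundary_port_dissipative[OF assms(4,5) ports(2)])
    have "AE z in lebesgue_on {a..b}. z \<in> {a..L} \<longrightarrow> Qd L q11m q11p z * x1 z = u1m z \<and> g1m z = G1m z"
      using ae1m by (rule AE_lebesgue_on_superset) auto
    moreover have "AE z in lebesgue_on {a..b}. z \<in> {L..b} \<longrightarrow> Qd L q11m q11p z * x1 z = u1p z \<and> g1p z = G1p z"
      using ae1p by (rule AE_lebesgue_on_superset) auto
    ultimately show "AE z in lebesgue_on {a..b}.
           (z < L \<longrightarrow> Qd L q11m q11p z * x1 z = u1m z \<and> y2 z = - G1m z) \<and>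
           (L < z \<longrightarrow> Qd L q11m q11p z * x1 z = u1p z \<and> y2 z = - G1p z) \<and>
           Qd L q22m q22p z * x2 z = u2 z \<and> y1 z = - G2 z"
      using ae2 y_eq AE_lebesgue_on_Icc_interior[of a b] by eventually_elim auto
  qed
qed

lemma mult_le_half_sum_squares:
  fixes w u v x1 x2 K M :: real
  assumes "\<bar>w\<bar> \<le> K" and "\<bar>u\<bar> \<le> M * \<bar>x1\<bar>" and "\<bar>v\<bar> \<le> M * \<bar>x2\<bar>" and "0 \<le> M"
  shows "w * (u * v) \<le> K * M\<^sup>2 / 2 * (x1\<^sup>2 + x2\<^sup>2)"
proof -
  have "w * (u * v) \<le> \<bar>w\<bar> * (\<bar>u\<bar> * \<bar>v\<bar>)"
    by (simp add: abs_mult[symmetric])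
  also have "\<dots> \<le> K * ((M * \<bar>x1\<bar>) * (M * \<bar>x2\<bar>))"
    using assms by (intro mult_mono) auto
  also have "\<dots> = K * M\<^sup>2 * (\<bar>x1\<bar> * \<bar>x2\<bar>)"
    by (simp add: power2_eq_square algebra_simps)
  also have "\<dots> \<le> K * M\<^sup>2 * ((x1\<^sup>2 + x2\<^sup>2) / 2)"
    using assms(1) sum_squares_bound[of "\<bar>x1\<bar>" "\<bar>x2\<bar>"]
    by (intro mult_left_mono) (auto simp: power2_eq_square algebra_simps)
  finally show ?thesis
    by simp
qed

lemma weighted_form_eq:
  fixes w P1 P2 Q1 Q2 x1 x2 y1 y2 U1 U2 G1 G2 :: real
  assumes "Q1 = w * P1" and "Q2 = w * P2" and "P1 * x1 = U1" and "P2 * x2 = U2"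
    and "y1 = - G2" and "y2 = - G1"
  shows "x1 * (Q1 * y1) + x2 * (Q2 * y2) = - (w * (G1 * U2 + U1 * G2))"
  unfolding assms(1,2,5,6) assms(3,4)[symmetric] by (simp add: algebra_simps)

lemma weighted_product_le:
  fixes w' P1 P2 x1 x2 U1 U2 K M :: real
  assumes "P1 * x1 = U1" and "P2 * x2 = U2"
    and "0 < P1" "P1 \<le> M" "0 < P2" "P2 \<le> M" and "\<bar>w'\<bar> \<le> K"
  shows "w' * (U1 * U2) \<le> K * M\<^sup>2 / 2 * (x1\<^sup>2 + x2\<^sup>2)"
proof -
  have "\<bar>U1\<bar> \<le> M * \<bar>x1\<bar>" "\<bar>U2\<bar> \<le> M * \<bar>x2\<bar>"
    unfolding assms(1,2)[symmetric] using assms(3-6) by (simp_all add: abs_mult mult_right_mono)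
  then show ?thesis
    using assms(3,4,7) by (intro mult_le_half_sum_squares) auto
qed

lemma integral_weighted_by_parts_le:
  fixes \<Phi> B :: "real \<Rightarrow> real"
  assumes "a \<le> L" and "L \<le> b"
    and u1m: "indef_integral_on a L u1m G1m" and u1p: "indef_integral_on L b u1p G1p"
    and u2: "indef_integral_on a b u2 G2" and "u2 L = 0"
    and w1: "indef_integral_on a b w1 w1'" and w2: "indef_integral_on a b w2 w2'"
    and "w1 a = 1" and "w2 b = 1"
    and \<Phi>_meas: "\<Phi> \<in> borel_measurable (lebesgue_on {a..b})" and B_int: "integrable (lebesgue_on {a..b}) B"
    and ae: "AE z in lebesgue_on {a..b}.
      (z < L \<longrightarrow> \<Phi> z = - (w1 z * (G1m z * u2 z + u1m z * G2 z)) \<and> w1' z * (u1m z * u2 z) \<le> B z) \<and>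
      (L < z \<longrightarrow> \<Phi> z = - (w2 z * (G1p z * u2 z + u1p z * G2 z)) \<and> w2' z * (u1p z * u2 z) \<le> B z)"
  shows "integral\<^sup>L (lebesgue_on {a..b}) \<Phi> \<le> u1m a * u2 a - u1p b * u2 b + integral\<^sup>L (lebesgue_on {a..b}) B"
proof -
  note left = indef_integral_by_parts[OF indef_integral_subinterval[OF w1 order_refl \<open>a \<le> L\<close> \<open>L \<le> b\<close>]
      u1m indef_integral_subinterval[OF u2 order_refl \<open>a \<le> L\<close> \<open>L \<le> b\<close>] \<open>a \<le> L\<close>]
  note right = indef_integral_by_parts[OF indef_integral_subinterval[OF w2 \<open>a \<le> L\<close> \<open>L \<le> b\<close> order_refl]
      u1p indef_integral_subinterval[OF u2 \<open>a \<le> L\<close> \<open>L \<le> b\<close> order_refl] \<open>L \<le> b\<close>]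
  define \<psi> where "\<psi> z = (if z < L then w1 z * (G1m z * u2 z + u1m z * G2 z)
                               else w2 z * (G1p z * u2 z + u1p z * G2 z))" for z
  define j where "j z = (if z < L then w1' z * (u1m z * u2 z) else w2' z * (u1p z * u2 z))" for z
  note \<psi>_split = integral_lebesgue_on_if_split[OF left(2) right(2) \<open>a \<le> L\<close> \<open>L \<le> b\<close>, folded \<psi>_def]
  note j_split = integral_lebesgue_on_if_split[OF left(1) right(1) \<open>a \<le> L\<close> \<open>L \<le> b\<close>, folded j_def]
  have ae': "AE z in lebesgue_on {a..b}. \<Phi> z = - \<psi> z \<and> j z \<le> B z"
    using ae AE_lebesgue_on_Icc_neq[where c=a and d=b and p=L]
    by eventually_elim (auto simp: \<psi>_def j_def)
  have "integral\<^sup>L (lebesgue_on {a..b}) \<Phi> = - integral\<^sup>L (lebesgue_on {a..b}) \<psi>"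
    using ae' \<Phi>_meas borel_measurable_integrable[OF \<psi>_split(1)]
    by (subst integral_minus[symmetric], intro integral_cong_AE) (auto elim!: eventually_mono)
  also have "\<dots> = u1m a * u2 a - u1p b * u2 b + integral\<^sup>L (lebesgue_on {a..b}) j"
    using \<psi>_split(2) j_split(2) left(3) right(3) \<open>u2 L = 0\<close> \<open>w1 a = 1\<close> \<open>w2 b = 1\<close> by simp
  also have "integral\<^sup>L (lebesgue_on {a..b}) j \<le> integral\<^sup>L (lebesgue_on {a..b}) B"
    using ae' j_split(1) B_int by (intro integral_mono_AE) (auto elim!: eventually_mono)
  finally show ?thesis
    by simp
qed

lemma ipQ0_A_graph_le_L2:
  assumes A: "A_graph a b q11m q22m q11p q22p 0 WB L x1 x2 y1 y2" and "a < L" and "L < b"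
    and rank: "rank WB = 2" and pos: "\<forall>v::real^2. 0 \<le> v \<bullet> ((WB ** Sigma ** transpose WB) *v v)"
    and cont: "continuous_on {a..b} q11m" "continuous_on {a..b} q11p"
      "continuous_on {a..b} q22m" "continuous_on {a..b} q22p"
    and q_bounds: "\<forall>z\<in>{a..b}. 0 < q11m z \<and> q11m z \<le> M \<and> 0 < q22m z \<and> q22m z \<le> M \<and>
      0 < q11p z \<and> q11p z \<le> M \<and> 0 < q22p z \<and> q22p z \<le> M"
    and w1: "indef_integral_on a b w1 w1'" and w2: "indef_integral_on a b w2 w2'"
    and "w1 a = 1" and "w2 b = 1" and w'_bounds: "\<forall>z\<in>{a..b}. \<bar>w1' z\<bar> \<le> K \<and> \<bar>w2' z\<bar> \<le> K"
    and factor: "\<forall>z\<in>{a..b}.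
      (z < L \<longrightarrow> Qd 0 q11m q11p z = w1 z * Qd L q11m q11p z \<and> Qd 0 q22m q22p z = w1 z * Qd L q22m q22p z) \<and>
      (L < z \<longrightarrow> Qd 0 q11m q11p z = w2 z * Qd L q11m q11p z \<and> Qd 0 q22m q22p z = w2 z * Qd L q22m q22p z)"
  shows "ipQ0 a b q11m q22m q11p q22p y1 y2 x1 x2
           \<le> K * M\<^sup>2 / 4 * integral\<^sup>L (lebesgue_on {a..b}) (\<lambda>z. (x1 z)\<^sup>2 + (x2 z)\<^sup>2)"
proof -
  obtain u1m G1m u1p G1p u2 G2 where
    u1m: "indef_integral_on a L u1m G1m" and u1p: "indef_integral_on L b u1p G1p"
    and u2: "indef_integral_on a b u2 G2" and "u2 L = 0" and boundary: "u1m a * u2 a \<le> u1p b * u2 b"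
    and ae: "AE z in lebesgue_on {a..b}.
           (z < L \<longrightarrow> Qd L q11m q11p z * x1 z = u1m z \<and> y2 z = - G1m z) \<and>
           (L < z \<longrightarrow> Qd L q11m q11p z * x1 z = u1p z \<and> y2 z = - G1p z) \<and>
           Qd L q22m q22p z * x2 z = u2 z \<and> y1 z = - G2 z"
    using A_graph_primitives[OF A \<open>a < L\<close> \<open>L < b\<close> rank pos] by blast
  define \<Phi> where "\<Phi> z = x1 z * (Qd 0 q11m q11p z * y1 z) + x2 z * (Qd 0 q22m q22p z * y2 z)" for z
  define B where "B z = K * M\<^sup>2 / 2 * ((x1 z)\<^sup>2 + (x2 z)\<^sup>2)" for z
  have L2: "L2_on {a..b} x1" "L2_on {a..b} x2" "L2_on {a..b} y1" "L2_on {a..b} y2"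
    using A unfolding A_graph_def by blast+
  have Qd_L: "0 < Qd L q11m q11p z" "Qd L q11m q11p z \<le> M"
    "0 < Qd L q22m q22p z" "Qd L q22m q22p z \<le> M" if "z \<in> {a..b}" for z
    using q_bounds that by (auto simp: Qd_def)
  have side: "\<Phi> z = - (w * (G1 * u2 z + U1 * G2 z))"
    if "Qd 0 q11m q11p z = w * Qd L q11m q11p z" "Qd 0 q22m q22p z = w * Qd L q22m q22p z"
      "Qd L q11m q11p z * x1 z = U1" "Qd L q22m q22p z * x2 z = u2 z" "y1 z = - G2 z" "y2 z = - G1"
    for z w U1 G1
    unfolding \<Phi>_def by (rule weighted_form_eq[OF that])
  have side_bound: "w' * (U1 * u2 z) \<le> B z"
    if "z \<in> {a..b}" "Qd L q11m q11p z * x1 z = U1" "Qd L q22m q22p z * x2 z = u2 z" "\<bar>w'\<bar> \<le> K"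
    for z w' U1
    unfolding B_def by (rule weighted_product_le[OF that(2,3) Qd_L[OF that(1)] that(4)])
  have "\<Phi> \<in> borel_measurable (lebesgue_on {a..b})"
    using L2 Qd_borel_measurable[OF cont(1,2)] Qd_borel_measurable[OF cont(3,4)]
    unfolding \<Phi>_def[abs_def] L2_on_def by (intro borel_measurable_add borel_measurable_times) auto
  moreover have "integrable (lebesgue_on {a..b}) B"
    using L2 by (simp add: B_def[abs_def] L2_on_def)
  moreover have "AE z in lebesgue_on {a..b}.
      (z < L \<longrightarrow> \<Phi> z = - (w1 z * (G1m z * u2 z + u1m z * G2 z)) \<and> w1' z * (u1m z * u2 z) \<le> B z) \<and>
      (L < z \<longrightarrow> \<Phi> z = - (w2 z * (G1p z * u2 z + u1p z * G2 z)) \<and> w2' z * (u1p z * u2 z) \<le> B z)"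
    using ae AE_lebesgue_on_Icc_interior[of a b]
  proof eventually_elim
    case (elim z)
    then have "z \<in> {a..b}"
      by simp
    with elim factor w'_bounds show ?case
      by (auto intro!: side side_bound)
  qed
  ultimately have "integral\<^sup>L (lebesgue_on {a..b}) \<Phi> \<le> u1m a * u2 a - u1p b * u2 b + integral\<^sup>L (lebesgue_on {a..b}) B"
    using \<open>a < L\<close> \<open>L < b\<close> \<open>u2 L = 0\<close> \<open>w1 a = 1\<close> \<open>w2 b = 1\<close>
    by (intro integral_weighted_by_parts_le[OF _ _ u1m u1p u2 _ w1 w2]) auto
  then show ?thesis
    using boundary L2 by (simp add: ipQ0_def \<Phi>_def[abs_def] B_def[abs_def] L2_on_def)
qed

lemma ipQ0_ge_L2:
  assumes x1: "L2_on {a..b} x1" and x2: "L2_on {a..b} x2"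
    and cont: "continuous_on {a..b} q11m" "continuous_on {a..b} q11p"
      "continuous_on {a..b} q22m" "continuous_on {a..b} q22p"
    and q_bounds: "\<forall>z\<in>{a..b}. m \<le> q11m z \<and> q11m z \<le> M \<and> m \<le> q22m z \<and> q22m z \<le> M \<and>
      m \<le> q11p z \<and> q11p z \<le> M \<and> m \<le> q22p z \<and> q22p z \<le> M"
    and "0 \<le> m"
  shows "m / 2 * integral\<^sup>L (lebesgue_on {a..b}) (\<lambda>z. (x1 z)\<^sup>2 + (x2 z)\<^sup>2)
           \<le> ipQ0 a b q11m q22m q11p q22p x1 x2 x1 x2"
proof -
  define Q1 where "Q1 = Qd 0 q11m q11p"
  define Q2 where "Q2 = Qd 0 q22m q22p"
  have Q_bounds: "m \<le> Q1 z \<and> Q1 z \<le> M \<and> m \<le> Q2 z \<and> Q2 z \<le> M" if "z \<in> {a..b}" for z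
    using q_bounds that by (auto simp: Q1_def Q2_def Qd_def)
  have "x1 \<in> borel_measurable (lebesgue_on {a..b})" "x2 \<in> borel_measurable (lebesgue_on {a..b})"
    and squares_int: "integrable (lebesgue_on {a..b}) (\<lambda>z. (x1 z)\<^sup>2)"
      "integrable (lebesgue_on {a..b}) (\<lambda>z. (x2 z)\<^sup>2)"
    using x1 x2 by (simp_all add: L2_on_def)
  then have form_meas: "(\<lambda>z. Q1 z * (x1 z)\<^sup>2 + Q2 z * (x2 z)\<^sup>2) \<in> borel_measurable (lebesgue_on {a..b})"
    using Qd_borel_measurable[OF cont(1,2)] Qd_borel_measurable[OF cont(3,4)]
    unfolding Q1_def Q2_def by (intro borel_measurable_add borel_measurable_times borel_measurable_power) auto
  have pointwise: "m * ((x1 z)\<^sup>2 + (x2 z)\<^sup>2) \<le> Q1 z * (x1 z)\<^sup>2 + Q2 z * (x2 z)\<^sup>2"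
    "\<bar>Q1 z * (x1 z)\<^sup>2 + Q2 z * (x2 z)\<^sup>2\<bar> \<le> M * ((x1 z)\<^sup>2 + (x2 z)\<^sup>2)" if "z \<in> {a..b}" for z
  proof -
    have "m * (x1 z)\<^sup>2 \<le> Q1 z * (x1 z)\<^sup>2" "Q1 z * (x1 z)\<^sup>2 \<le> M * (x1 z)\<^sup>2"
      "m * (x2 z)\<^sup>2 \<le> Q2 z * (x2 z)\<^sup>2" "Q2 z * (x2 z)\<^sup>2 \<le> M * (x2 z)\<^sup>2"
      using Q_bounds[OF that] by (simp_all add: mult_right_mono)
    moreover have "0 \<le> m * (x1 z)\<^sup>2" "0 \<le> m * (x2 z)\<^sup>2"
      using \<open>0 \<le> m\<close> by simp_all
    ultimately show "m * ((x1 z)\<^sup>2 + (x2 z)\<^sup>2) \<le> Q1 z * (x1 z)\<^sup>2 + Q2 z * (x2 z)\<^sup>2"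
      "\<bar>Q1 z * (x1 z)\<^sup>2 + Q2 z * (x2 z)\<^sup>2\<bar> \<le> M * ((x1 z)\<^sup>2 + (x2 z)\<^sup>2)"
      by (simp_all add: distrib_left)
  qed
  have "integrable (lebesgue_on {a..b}) (\<lambda>z. Q1 z * (x1 z)\<^sup>2 + Q2 z * (x2 z)\<^sup>2)"
  proof (rule Bochner_Integration.integrable_bound[OF _ form_meas AE_I2])
    show "integrable (lebesgue_on {a..b}) (\<lambda>z. M * ((x1 z)\<^sup>2 + (x2 z)\<^sup>2))"
      using squares_int by simp
    fix z assume "z \<in> space (lebesgue_on {a..b})"
    then have "\<bar>Q1 z * (x1 z)\<^sup>2 + Q2 z * (x2 z)\<^sup>2\<bar> \<le> M * ((x1 z)\<^sup>2 + (x2 z)\<^sup>2)"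
      by (intro pointwise(2)) simp
    then show "norm (Q1 z * (x1 z)\<^sup>2 + Q2 z * (x2 z)\<^sup>2) \<le> norm (M * ((x1 z)\<^sup>2 + (x2 z)\<^sup>2))"
      unfolding real_norm_def by linarith
  qed
  then have "integral\<^sup>L (lebesgue_on {a..b}) (\<lambda>z. m * ((x1 z)\<^sup>2 + (x2 z)\<^sup>2))
      \<le> integral\<^sup>L (lebesgue_on {a..b}) (\<lambda>z. Q1 z * (x1 z)\<^sup>2 + Q2 z * (x2 z)\<^sup>2)"
    using squares_int pointwise(1) by (intro integral_mono) auto
  then show ?thesis
    using squares_int
    by (simp add: ipQ0_def Q1_def Q2_def power2_eq_square algebra_simps)
qed

lemma ipQ0_A_graph_quasi_dissipative:
  assumes A: "A_graph a b q11m q22m q11p q22p 0 WB L x1 x2 y1 y2" and "a < L" and "L < b"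
    and rank: "rank WB = 2" and pos: "\<forall>v::real^2. 0 \<le> v \<bullet> ((WB ** Sigma ** transpose WB) *v v)"
    and cont: "continuous_on {a..b} q11m" "continuous_on {a..b} q11p"
      "continuous_on {a..b} q22m" "continuous_on {a..b} q22p"
    and q_bounds: "\<forall>z\<in>{a..b}. m \<le> q11m z \<and> q11m z \<le> M \<and> m \<le> q22m z \<and> q22m z \<le> M \<and>
      m \<le> q11p z \<and> q11p z \<le> M \<and> m \<le> q22p z \<and> q22p z \<le> M" and "0 < m"
    and w1: "indef_integral_on a b w1 w1'" and w2: "indef_integral_on a b w2 w2'"
    and "w1 a = 1" and "w2 b = 1" and w'_bounds: "\<forall>z\<in>{a..b}. \<bar>w1' z\<bar> \<le> K \<and> \<bar>w2' z\<bar> \<le> K"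
    and factor: "\<forall>z\<in>{a..b}.
      (z < L \<longrightarrow> Qd 0 q11m q11p z = w1 z * Qd L q11m q11p z \<and> Qd 0 q22m q22p z = w1 z * Qd L q22m q22p z) \<and>
      (L < z \<longrightarrow> Qd 0 q11m q11p z = w2 z * Qd L q11m q11p z \<and> Qd 0 q22m q22p z = w2 z * Qd L q22m q22p z)"
  shows "ipQ0 a b q11m q22m q11p q22p y1 y2 x1 x2 \<le> K * M\<^sup>2 / (2 * m) * ipQ0 a b q11m q22m q11p q22p x1 x2 x1 x2"
proof -
  let ?N = "integral\<^sup>L (lebesgue_on {a..b}) (\<lambda>z. (x1 z)\<^sup>2 + (x2 z)\<^sup>2)"
  have "\<forall>z\<in>{a..b}. 0 < q11m z \<and> q11m z \<le> M \<and> 0 < q22m z \<and> q22m z \<le> M \<and>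
      0 < q11p z \<and> q11p z \<le> M \<and> 0 < q22p z \<and> q22p z \<le> M"
    using q_bounds \<open>0 < m\<close> by force
  then have "ipQ0 a b q11m q22m q11p q22p y1 y2 x1 x2 \<le> K * M\<^sup>2 / 4 * ?N"
    by (rule ipQ0_A_graph_le_L2[OF A \<open>a < L\<close> \<open>L < b\<close> rank pos cont _ w1 w2 \<open>w1 a = 1\<close> \<open>w2 b = 1\<close>
          w'_bounds factor])
  also have "\<dots> = K * M\<^sup>2 / (2 * m) * (m / 2 * ?N)"
    using \<open>0 < m\<close> by simp
  also have "\<dots> \<le> K * M\<^sup>2 / (2 * m) * ipQ0 a b q11m q22m q11p q22p x1 x2 x1 x2"
  proof (rule mult_left_mono)
    have "L2_on {a..b} x1" "L2_on {a..b} x2"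
      using A unfolding A_graph_def by blast+
    then show "m / 2 * ?N \<le> ipQ0 a b q11m q22m q11p q22p x1 x2 x1 x2"
      using \<open>0 < m\<close> by (intro ipQ0_ge_L2[OF _ _ cont q_bounds]) auto
    have "0 \<le> K"
      using w'_bounds \<open>a < L\<close> \<open>L < b\<close> by (meson abs_ge_zero atLeastAtMost_iff less_imp_le order.trans)
    then show "0 \<le> K * M\<^sup>2 / (2 * m)"
      using \<open>0 < m\<close> by simp
  qed
  finally show ?thesis .
qed

section \<open>Weights for a moving interface\<close>

lemma C1_on_interval_imp_continuous_on:
  assumes "C1_on_interval a b f"
  shows "continuous_on {a..b} f"
  using assms DERIV_continuous
  unfolding C1_on_interval_def continuous_on_eq_continuous_within by blast

lemma C1_on_interval_divide:
  assumes p: "C1_on_interval a b p" and q: "C1_on_interval a b q" and "\<forall>z\<in>{a..b}. q z \<noteq> 0"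
  shows "C1_on_interval a b (\<lambda>z. p z / q z)"
proof -
  obtain p' where p': "continuous_on {a..b} p'" "\<forall>z\<in>{a..b}. (p has_real_derivative p' z) (at z within {a..b})"
    using p unfolding C1_on_interval_def by blast
  obtain q' where q': "continuous_on {a..b} q'" "\<forall>z\<in>{a..b}. (q has_real_derivative q' z) (at z within {a..b})"
    using q unfolding C1_on_interval_def by blast
  have "continuous_on {a..b} (\<lambda>z. (p' z * q z - p z * q' z) / (q z * q z))"
    using assms p' q' C1_on_interval_imp_continuous_on[OF p] C1_on_interval_imp_continuous_on[OF q]
    by (intro continuous_intros) auto
  moreover have "\<forall>z\<in>{a..b}. ((\<lambda>z. p z / q z) has_real_derivative
      (p' z * q z - p z * q' z) / (q z * q z)) (at z within {a..b})"
    using assms p' q' by (auto intro!: DERIV_divide)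
  ultimately show ?thesis
    unfolding C1_on_interval_def by blast
qed

lemma interface_weights:
  assumes "a < 0" and "0 < b"
    and \<rho>': "\<forall>z\<in>{a..b}. (\<rho> has_real_derivative \<rho>' z) (at z within {a..b})"
    and cont: "continuous_on {a..b} \<rho>'" and "\<rho> 0 = 1"
  shows "indef_integral_on a b (\<lambda>z. if z < 0 then 1 else \<rho> z) (\<lambda>z. if z < 0 then 0 else \<rho>' z)"
    and "indef_integral_on a b (\<lambda>z. if z < 0 then \<rho> z else 1) (\<lambda>z. if z < 0 then \<rho>' z else 0)"
proof -
  have one: "indef_integral_on c d (\<lambda>_. 1) (\<lambda>_. 0)" for c d
    by (rule indef_integral_on_derivative[where S=UNIV]) auto
  have "indef_integral_on a 0 \<rho> \<rho>'"
    using \<rho>' \<open>0 < b\<close> by (intro indef_integral_on_derivative continuous_on_subset[OF cont]) auto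
  from indef_integral_glue[OF this one] \<open>\<rho> 0 = 1\<close> \<open>a < 0\<close> \<open>0 < b\<close>
  show "indef_integral_on a b (\<lambda>z. if z < 0 then \<rho> z else 1) (\<lambda>z. if z < 0 then \<rho>' z else 0)"
    by simp
  have "indef_integral_on 0 b \<rho> \<rho>'"
    using \<rho>' \<open>a < 0\<close> by (intro indef_integral_on_derivative continuous_on_subset[OF cont]) auto
  from indef_integral_glue[OF one this] \<open>\<rho> 0 = 1\<close> \<open>a < 0\<close> \<open>0 < b\<close>
  show "indef_integral_on a b (\<lambda>z. if z < 0 then 1 else \<rho> z) (\<lambda>z. if z < 0 then 0 else \<rho>' z)"
    by simp
qed

lemma Qd_interface_factor:
  assumes "\<forall>z\<in>{a..b}. q11p z = \<rho> z * q11m z \<and> q11m z = \<sigma> z * q11p z \<and>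
      q22p z = \<rho> z * q22m z \<and> q22m z = \<sigma> z * q22p z"
  shows "\<forall>z\<in>{a..b}.
    (z < L \<longrightarrow> Qd 0 q11m q11p z = (if z < 0 then 1 else \<rho> z) * Qd L q11m q11p z \<and>
               Qd 0 q22m q22p z = (if z < 0 then 1 else \<rho> z) * Qd L q22m q22p z) \<and>
    (L < z \<longrightarrow> Qd 0 q11m q11p z = (if z < 0 then \<sigma> z else 1) * Qd L q11m q11p z \<and>
               Qd 0 q22m q22p z = (if z < 0 then \<sigma> z else 1) * Qd L q22m q22p z)"
proof (intro ballI conjI impI)
  fix z assume "z \<in> {a..b}"
  then have plus: "q11p z = \<rho> z * q11m z" "q22p z = \<rho> z * q22m z"
    and minus: "q11m z = \<sigma> z * q11p z" "q22m z = \<sigma> z * q22p z"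
    using assms by blast+
  show "Qd 0 q11m q11p z = (if z < 0 then 1 else \<rho> z) * Qd L q11m q11p z"
    "Qd 0 q22m q22p z = (if z < 0 then 1 else \<rho> z) * Qd L q22m q22p z" if "z < L"
    using that plus by (simp_all add: Qd_def)
  show "Qd 0 q11m q11p z = (if z < 0 then \<sigma> z else 1) * Qd L q11m q11p z"
    "Qd 0 q22m q22p z = (if z < 0 then \<sigma> z else 1) * Qd L q22m q22p z" if "L < z"
    using that minus by (simp_all add: Qd_def)
qed

lemma C1_ratio_derivatives_bounded:
  assumes p: "C1_on_interval a b p" and q: "C1_on_interval a b q" and pos: "\<forall>z\<in>{a..b}. 0 < p z \<and> 0 < q z"
  obtains K \<rho>' \<sigma>' where "0 < K" and "\<forall>z\<in>{a..b}. \<bar>\<rho>' z\<bar> \<le> K \<and> \<bar>\<sigma>' z\<bar> \<le> K"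
    and "continuous_on {a..b} \<rho>'" "\<forall>z\<in>{a..b}. ((\<lambda>z. p z / q z) has_real_derivative \<rho>' z) (at z within {a..b})"
    and "continuous_on {a..b} \<sigma>'" "\<forall>z\<in>{a..b}. ((\<lambda>z. q z / p z) has_real_derivative \<sigma>' z) (at z within {a..b})"
proof -
  have "C1_on_interval a b (\<lambda>z. p z / q z)" "C1_on_interval a b (\<lambda>z. q z / p z)"
    by (rule C1_on_interval_divide[OF p q], use pos in force) (rule C1_on_interval_divide[OF q p], use pos in force)
  then obtain \<rho>' \<sigma>' where \<rho>': "continuous_on {a..b} \<rho>'"
      "\<forall>z\<in>{a..b}. ((\<lambda>z. p z / q z) has_real_derivative \<rho>' z) (at z within {a..b})"
    and \<sigma>': "continuous_on {a..b} \<sigma>'" "\<forall>z\<in>{a..b}. ((\<lambda>z. q z / p z) has_real_derivative \<sigma>' z) (at z within {a..b})"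
    unfolding C1_on_interval_def by blast
  have "continuous_on {a..b} (\<lambda>z. \<bar>\<rho>' z\<bar> + \<bar>\<sigma>' z\<bar>)"
    using \<rho>'(1) \<sigma>'(1) by (intro continuous_on_add continuous_on_rabs)
  then have "bounded ((\<lambda>z. \<bar>\<rho>' z\<bar> + \<bar>\<sigma>' z\<bar>) ` {a..b})"
    by (intro compact_imp_bounded compact_continuous_image compact_Icc)
  then obtain K where "0 < K" and "\<forall>z\<in>{a..b}. \<bar>\<rho>' z\<bar> + \<bar>\<sigma>' z\<bar> \<le> K"
    unfolding bounded_pos by force
  then have "\<forall>z\<in>{a..b}. \<bar>\<rho>' z\<bar> \<le> K \<and> \<bar>\<sigma>' z\<bar> \<le> K"
    by force
  with \<open>0 < K\<close> \<rho>' \<sigma>' that show ?thesis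
    by blast
qed

lemma interface_weight_functions:
  assumes "a < 0" and "0 < b"
    and q11: "C1_on_interval a b q11m" "C1_on_interval a b q11p"
    and q_pos: "\<forall>z\<in>{a..b}. 0 < q11m z \<and> 0 < q22m z \<and> 0 < q11p z \<and> 0 < q22p z"
    and "q11p 0 = q11m 0" and ratio: "\<forall>z\<in>{a..b}. q11p z / q11m z = q22p z / q22m z"
  obtains K w1 w1' w2 w2' where "0 < K"
    and "indef_integral_on a b w1 w1'" and "indef_integral_on a b w2 w2'" and "w1 a = 1" and "w2 b = 1"
    and "\<forall>z\<in>{a..b}. \<bar>w1' z\<bar> \<le> K \<and> \<bar>w2' z\<bar> \<le> K"
    and "\<And>L. \<forall>z\<in>{a..b}.
      (z < L \<longrightarrow> Qd 0 q11m q11p z = w1 z * Qd L q11m q11p z \<and> Qd 0 q22m q22p z = w1 z * Qd L q22m q22p z) \<and>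
      (L < z \<longrightarrow> Qd 0 q11m q11p z = w2 z * Qd L q11m q11p z \<and> Qd 0 q22m q22p z = w2 z * Qd L q22m q22p z)"
proof -
  define \<rho> where "\<rho> z = q11p z / q11m z" for z
  define \<sigma> where "\<sigma> z = q11m z / q11p z" for z
  obtain K \<rho>' \<sigma>' where "0 < K" and K: "\<forall>z\<in>{a..b}. \<bar>\<rho>' z\<bar> \<le> K \<and> \<bar>\<sigma>' z\<bar> \<le> K"
    and \<rho>': "continuous_on {a..b} \<rho>'" "\<forall>z\<in>{a..b}. (\<rho> has_real_derivative \<rho>' z) (at z within {a..b})"
    and \<sigma>': "continuous_on {a..b} \<sigma>'" "\<forall>z\<in>{a..b}. (\<sigma> has_real_derivative \<sigma>' z) (at z within {a..b})"
    using C1_ratio_derivatives_bounded[OF q11(2,1)] q_pos unfolding \<rho>_def[abs_def] \<sigma>_def[abs_def] by blast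
  have "0 < q11m 0"
    using q_pos \<open>a < 0\<close> \<open>0 < b\<close> by simp
  then have "\<rho> 0 = 1" "\<sigma> 0 = 1"
    using \<open>q11p 0 = q11m 0\<close> by (simp_all add: \<rho>_def \<sigma>_def)
  have "q11p z = \<rho> z * q11m z \<and> q11m z = \<sigma> z * q11p z \<and> q22p z = \<rho> z * q22m z \<and> q22m z = \<sigma> z * q22p z"
    if "z \<in> {a..b}" for z
  proof -
    have "0 < q11m z" "0 < q22m z" "0 < q11p z" "0 < q22p z" "q11p z / q11m z = q22p z / q22m z"
      using q_pos ratio that by auto
    then show ?thesis
      by (simp add: \<rho>_def \<sigma>_def field_simps)
  qed
  then have "\<forall>z\<in>{a..b}. q11p z = \<rho> z * q11m z \<and> q11m z = \<sigma> z * q11p z \<and>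
      q22p z = \<rho> z * q22m z \<and> q22m z = \<sigma> z * q22p z"
    by blast
  from that[OF \<open>0 < K\<close> interface_weights(1)[OF \<open>a < 0\<close> \<open>0 < b\<close> \<rho>'(2,1) \<open>\<rho> 0 = 1\<close>]
      interface_weights(2)[OF \<open>a < 0\<close> \<open>0 < b\<close> \<sigma>'(2,1) \<open>\<sigma> 0 = 1\<close>] _ _ _ Qd_interface_factor[OF this]]
  show thesis
    using K \<open>0 < K\<close> \<open>a < 0\<close> \<open>0 < b\<close> by fastforce
qed

theorem theorem1:
  fixes a b \<tau> m M :: real
    and l :: "real \<Rightarrow> real"
    and q11m q22m q11p q22p :: "real \<Rightarrow> real"
    and WB :: "real^4^2"
  assumes "a < 0" and "0 < b" and "0 < \<tau>"
    and "C1_on_interval 0 \<tau> l" and "\<forall>t\<in>{0..\<tau>}. l t \<in> {a<..<b}"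
    and "C1_on_interval a b q11m" and "C1_on_interval a b q22m"
    and "C1_on_interval a b q11p" and "C1_on_interval a b q22p"
    and "0 < m" and "m \<le> M"
    and "\<forall>z\<in>{a..b}. m \<le> q11m z \<and> q11m z \<le> M \<and> m \<le> q22m z \<and> q22m z \<le> M \<and>
                    m \<le> q11p z \<and> q11p z \<le> M \<and> m \<le> q22p z \<and> q22p z \<le> M"
    and "q11p 0 / q11m 0 = 1"
    and "\<forall>z\<in>{a..b}. q11p z / q11m z = q22p z / q22m z"
    and "rank WB = 2"
    and "\<forall>v::real^2. 0 \<le> v \<bullet> ((WB ** Sigma ** transpose WB) *v v)"
  shows "\<exists>\<omega>>0. \<forall>t\<in>{0..\<tau>}. \<forall>x1 x2 y1 y2.
           A_graph a b q11m q22m q11p q22p 0 WB (l t) x1 x2 y1 y2 \<longrightarrow>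
           ipQ0 a b q11m q22m q11p q22p y1 y2 x1 x2
             \<le> \<omega> * ipQ0 a b q11m q22m q11p q22p x1 x2 x1 x2"
proof -
  have q_cont: "continuous_on {a..b} q11m" "continuous_on {a..b} q11p"
    "continuous_on {a..b} q22m" "continuous_on {a..b} q22p"
    using assms(6-9) by (simp_all add: C1_on_interval_imp_continuous_on)
  have "q11p 0 = q11m 0"
    using assms(13) by simp
  moreover have "\<forall>z\<in>{a..b}. 0 < q11m z \<and> 0 < q22m z \<and> 0 < q11p z \<and> 0 < q22p z"
    using assms(12) \<open>0 < m\<close> by force
  ultimately obtain K w1 w1' w2 w2' where "0 < K" and weights: "indef_integral_on a b w1 w1'"
    "indef_integral_on a b w2 w2'" "w1 a = 1" "w2 b = 1" "\<forall>z\<in>{a..b}. \<bar>w1' z\<bar> \<le> K \<and> \<bar>w2' z\<bar> \<le> K"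
    and factor: "\<And>L. \<forall>z\<in>{a..b}.
      (z < L \<longrightarrow> Qd 0 q11m q11p z = w1 z * Qd L q11m q11p z \<and> Qd 0 q22m q22p z = w1 z * Qd L q22m q22p z) \<and>
      (L < z \<longrightarrow> Qd 0 q11m q11p z = w2 z * Qd L q11m q11p z \<and> Qd 0 q22m q22p z = w2 z * Qd L q22m q22p z)"
    using interface_weight_functions[OF \<open>a < 0\<close> \<open>0 < b\<close> assms(6,8)] assms(14) by metis
  have "0 < K * M\<^sup>2 / (2 * m)"
    using \<open>0 < K\<close> \<open>0 < m\<close> \<open>m \<le> M\<close> by simp
  moreover have "ipQ0 a b q11m q22m q11p q22p y1 y2 x1 x2
      \<le> K * M\<^sup>2 / (2 * m) * ipQ0 a b q11m q22m q11p q22p x1 x2 x1 x2"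
    if "t \<in> {0..\<tau>}" and "A_graph a b q11m q22m q11p q22p 0 WB (l t) x1 x2 y1 y2" for t x1 x2 y1 y2
    using that assms(5) ipQ0_A_graph_quasi_dissipative[OF _ _ _ assms(15,16) q_cont assms(12) \<open>0 < m\<close> weights factor]
    by auto
  ultimately show ?thesis
    by blast
qed

end
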